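(* Let $\xi>0$ be such that $D^TD-\xi^2I$ is nonsingular, let $N$ be a positive integer and let the mesh $\Omega_N=\{\theta_{N,i}: i=-N,\dots,N\}$ satisfy $\theta_{N,-i}=-\theta_{N,i}$ for $i=1,\dots,N$. Then for all $\lambda\in\mathbb{C}$, $\det(\lambda I-\mathcal{L}_\xi^N)=0$ if and only if $\det(-\bar\lambda I-\mathcal{L}_\xi^N)=0$.
   Context: Let $n,m,n_u,n_y$ be positive integers, $A_0,\dots,A_m\in\mathbb{R}^{n\times n}$, $B\in\mathbb{R}^{n\times n_u}$, $C\in\mathbb{R}^{n_y\times n}$, $D\in\mathbb{R}^{n_y\times n_u}$, delays $\tau_1,\dots,\tau_m\ge0$, $\tau_{\max}=\max_i\tau_i>0$. For $\xi>0$ put $D_\xi=D^TD-\xi^2I_{n_u}$, $\tilde D_\xi=DD^T-\xi^2I_{n_y}$, and define $2n\times2n$ matrices $M_0=\begin{bmatrix} A_0-BD_\xi^{-1}D^TC & -BD_\xi^{-1}B^T\\ \xi^2 C^T\tilde D_\xi^{-1}C & -A_0^T+C^TDD_\xi^{-1}B^T\end{bmatrix}$, $M_i=\begin{bmatrix}A_i&0\\0&0\end{bmatrix}$, $M_{-i}=\begin{bmatrix}0&0\\0&-A_i^T\end{bmatrix}$, $1\le i\le m$. A mesh $\Omega_N$ consists of $2N+1$ points $-\tau_{\max}\le\theta_{N,-N}<\dots<\theta_{N,0}=0<\dots<\theta_{N,N}\le\tau_{\max}$. Let $X_N=(\mathbb{C}^{2n})^{2N+1}$ with elements $x=(x_{-N},\dots,x_N)$,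 and let $\mathcal{P}_Nx$ be the unique $\mathbb{C}^{2n}$-valued polynomial of degree $\le 2N$ with $\mathcal{P}_Nx(\theta_{N,i})=x_i$ for all $i$. The matrix $\mathcal{L}_\xi^N:X_N\to X_N$ is defined by $(\mathcal{L}_\xi^Nx)_i=(\mathcal{P}_Nx)'(\theta_{N,i})$ for $i\ne0$ and $(\mathcal{L}_\xi^Nx)_0=M_0\mathcal{P}_Nx(0)+\sum_{i=1}^m\left(M_i\mathcal{P}_Nx(-\tau_i)+M_{-i}\mathcal{P}_Nx(\tau_i)\right)$. *)

theory Defs
  imports "Jordan_Normal_Form.Determinant" "Jordan_Normal_Form.Gauss_Jordan_Elimination"
    "HOL-Computational_Algebra.Polynomial"
begin

definition minv :: "real mat \<Rightarrow> real mat" where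
  "minv X = the (mat_inverse X)"

definition Dxi :: "real mat \<Rightarrow> real \<Rightarrow> real mat" where
  "Dxi D \<xi> = transpose_mat D * D - (\<xi>^2) \<cdot>\<^sub>m 1\<^sub>m (dim_col D)"

definition Dtxi :: "real mat \<Rightarrow> real \<Rightarrow> real mat" where
  "Dtxi D \<xi> = D * transpose_mat D - (\<xi>^2) \<cdot>\<^sub>m 1\<^sub>m (dim_row D)"

definition M0 :: "real mat \<Rightarrow> real mat \<Rightarrow> real mat \<Rightarrow> real mat \<Rightarrow> real \<Rightarrow> real mat" where
  "M0 A0 B C D \<xi> = four_block_mat
     (A0 - B * minv (Dxi D \<xi>) * transpose_mat D * C)
     (- (B * minv (Dxi D \<xi>) * transpose_mat B))
     ((\<xi>^2) \<cdot>\<^sub>m (transpose_mat C * minv (Dtxi D \<xi>) * C))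
     (- transpose_mat A0 + transpose_mat C * D * minv (Dxi D \<xi>) * transpose_mat B)"

definition Mplus :: "real mat \<Rightarrow> real mat" where
  "Mplus Ai = four_block_mat Ai (0\<^sub>m (dim_row Ai) (dim_row Ai))
                 (0\<^sub>m (dim_row Ai) (dim_row Ai)) (0\<^sub>m (dim_row Ai) (dim_row Ai))"

definition Mminus :: "real mat \<Rightarrow> real mat" where
  "Mminus Ai = four_block_mat (0\<^sub>m (dim_row Ai) (dim_row Ai)) (0\<^sub>m (dim_row Ai) (dim_row Ai))
                 (0\<^sub>m (dim_row Ai) (dim_row Ai)) (- transpose_mat Ai)"

(* Elements x of X_N = (C^{2n})^{2N+1} are represented as functions x i c,
   block index i in {-N..N}, component c < 2n.
   interp N theta x c is the c-th component of P_N x: the unique polynomial of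
   degree <= 2N interpolating the c-th components at the mesh points. *)
definition interp :: "nat \<Rightarrow> (int \<Rightarrow> real) \<Rightarrow> (int \<Rightarrow> nat \<Rightarrow> complex) \<Rightarrow> nat \<Rightarrow> complex poly" where
  "interp N \<theta> x c = (THE p. degree p \<le> 2 * N \<and>
       (\<forall>i\<in>{- int N..int N}. poly p (complex_of_real (\<theta> i)) = x i c))"

definition Lop :: "nat \<Rightarrow> nat \<Rightarrow> (nat \<Rightarrow> real mat) \<Rightarrow> real mat \<Rightarrow> real mat \<Rightarrow> real mat
      \<Rightarrow> (nat \<Rightarrow> real) \<Rightarrow> real \<Rightarrow> nat \<Rightarrow> (int \<Rightarrow> real)
      \<Rightarrow> (int \<Rightarrow> nat \<Rightarrow> complex) \<Rightarrow> (int \<Rightarrow> nat \<Rightarrow> complex)" where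
  "Lop n m A B C D \<tau> \<xi> N \<theta> x i c =
     (let P = (\<lambda>d t. poly (interp N \<theta> x d) (complex_of_real t)) in
      if i \<noteq> 0 then poly (pderiv (interp N \<theta> x c)) (complex_of_real (\<theta> i))
      else (\<Sum>d<2*n. complex_of_real (M0 (A 0) B C D \<xi> $$ (c, d)) * P d 0)
         + (\<Sum>k\<in>{1..m}. \<Sum>d<2*n.
              complex_of_real (Mplus (A k) $$ (c, d)) * P d (- \<tau> k)
            + complex_of_real (Mminus (A k) $$ (c, d)) * P d (\<tau> k)))"

(* Coordinates: row/column index r < (2N+1)*2n corresponds to block
   i = r div (2n) - N and component r mod (2n). *)
definition blk :: "nat \<Rightarrow> nat \<Rightarrow> nat \<Rightarrow> int" where
  "blk n N r = int (r div (2*n)) - int N"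

definition unitX :: "nat \<Rightarrow> nat \<Rightarrow> nat \<Rightarrow> (int \<Rightarrow> nat \<Rightarrow> complex)" where
  "unitX n N s = (\<lambda>i c. if i = blk n N s \<and> c = s mod (2*n) then 1 else 0)"

definition LN :: "nat \<Rightarrow> nat \<Rightarrow> (nat \<Rightarrow> real mat) \<Rightarrow> real mat \<Rightarrow> real mat \<Rightarrow> real mat
      \<Rightarrow> (nat \<Rightarrow> real) \<Rightarrow> real \<Rightarrow> nat \<Rightarrow> (int \<Rightarrow> real) \<Rightarrow> complex mat" where
  "LN n m A B C D \<tau> \<xi> N \<theta> =
     mat ((2*N+1)*(2*n)) ((2*N+1)*(2*n))
       (\<lambda>(r, s). Lop n m A B C D \<tau> \<xi> N \<theta> (unitX n N s) (blk n N r) (r mod (2*n)))"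

end

theory Submission
  imports Defs
begin

(* Let L x = z x with z /= 0. At every nonzero mesh point the collocation equation says
   p' = z p for the interpolant p of each component of x, so p' - z p is a multiple of the
   node polynomial omega(t) = prod_{i /= 0} (t - theta_i). Since d/dt - z is injective on
   polynomials, all components are multiples a_c f of a single f with f' - z f = omega, and
   the remaining equation at theta_0 = 0 becomes a 2n x 2n linear system H(z, f) a = 0.
   On a symmetric mesh omega also vanishes at -theta_i, so g(t) = -f(-t) satisfies
   g' = -z g at the nonzero nodes; the Hamiltonian structure of M_0, together with the
   exchange of M_i and M_{-i}, gives H(-z, g) = J H(z, f)^T J^T. Hence -z is an eigenvalue
   whenever z is, and since L has real entries its eigenvalues also come in conjugate
   pairs. *)

section \<open>Polynomials\<close>

lemma pderiv_sum: "pderiv (sum f A) = (\<Sum>x\<in>A. pderiv (f x))"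
  using higher_pderiv_sum[of 1 f A] by simp

lemma pderiv_map_poly_cnj: "pderiv (map_poly cnj p) = map_poly cnj (pderiv p)"
  by (rule poly_eqI) (simp add: coeff_pderiv coeff_map_poly)

lemma pderiv_eq_smult_imp_zero:
  fixes g :: "'a::{field, ring_char_0} poly"
  assumes ode: "pderiv g = smult z g" and "z \<noteq> 0"
  shows "g = 0"
proof -
  have "degree g = degree g - 1" using degree_pderiv[of g] ode \<open>z \<noteq> 0\<close> by simp
  then have "pderiv g = 0" by (simp add: pderiv_eq_0_iff)
  with ode \<open>z \<noteq> 0\<close> show ?thesis by simp
qed

lemma pderiv_minus_smult_inject:
  fixes p q :: "'a::{field, ring_char_0} poly"
  assumes "pderiv p - smult z p = pderiv q - smult z q" and "z \<noteq> 0"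
  shows "p = q"
proof -
  have "pderiv (p - q) = smult z (p - q)"
    using assms(1) by (simp add: pderiv_diff smult_diff_right algebra_simps)
  then have "p - q = 0" by (rule pderiv_eq_smult_imp_zero[OF _ assms(2)])
  then show ?thesis by simp
qed

definition point_reflection :: "'a::comm_ring_1 poly \<Rightarrow> 'a poly" where
  "point_reflection f = - pcompose f [:0, -1:]"

lemma poly_point_reflection [simp]: "poly (point_reflection f) x = - poly f (- x)"
  by (simp add: point_reflection_def poly_pcompose)

lemma poly_pderiv_point_reflection:
  fixes f :: "'a::idom poly"
  shows "poly (pderiv (point_reflection f)) x = poly (pderiv f) (- x)"
  by (simp add: point_reflection_def pderiv_minus pderiv_pcompose pderiv_pCons poly_pcompose)

lemma degree_point_reflection [simp]:
  fixes f :: "'a::idom poly"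
  shows "degree (point_reflection f) = degree f"
  by (simp add: point_reflection_def degree_pcompose)

lemma point_reflection_eq_0_iff [simp]:
  fixes f :: "'a::idom poly"
  shows "point_reflection f = 0 \<longleftrightarrow> f = 0"
  by (simp add: point_reflection_def pcompose_eq_0_iff)

section \<open>Interpolation on the mesh\<close>

lemma interpolating_poly_exists:
  fixes t v :: "'i \<Rightarrow> 'a::field"
  assumes fin: "finite I" and inj: "inj_on t I"
  shows "\<exists>p. degree p \<le> card I - 1 \<and> (\<forall>i\<in>I. poly p (t i) = v i)"
proof -
  define L where "L j = (\<Prod>k\<in>I - {j}. [:- t k, 1:])" for j
  have degree_L: "degree (L j) \<le> card I - 1" if "j \<in> I" for j
  proof -
    have "degree (L j) \<le> sum (degree \<circ> (\<lambda>k. [:- t k, 1:])) (I - {j})"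
      unfolding L_def by (rule degree_prod_sum_le) (use fin in auto)
    also have "\<dots> = card I - 1" using that fin by simp
    finally show ?thesis .
  qed
  have poly_L: "poly (L j) (t i) = (\<Prod>k\<in>I - {j}. t i - t k)" for i j
    unfolding L_def by (simp add: poly_prod)
  have L_zero: "poly (L j) (t i) = 0" if "i \<in> I" "j \<in> I" "i \<noteq> j" for i j
    unfolding poly_L using that fin by (auto intro!: prod_zero)
  have L_nonzero: "poly (L j) (t j) \<noteq> 0" if "j \<in> I" for j
    unfolding poly_L using that fin inj by (auto simp: inj_on_def)
  define p where "p = (\<Sum>j\<in>I. smult (v j / poly (L j) (t j)) (L j))"
  have "degree p \<le> card I - 1"
    unfolding p_def by (rule degree_sum_le[OF fin]) (meson degree_L degree_smult_le order_trans)
  moreover have "poly p (t i) = v i" if "i \<in> I" for i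
  proof -
    have "poly p (t i) = (\<Sum>j\<in>I. v j / poly (L j) (t j) * poly (L j) (t i))"
      unfolding p_def by (simp add: poly_sum)
    also have "\<dots> = v i / poly (L i) (t i) * poly (L i) (t i)"
      by (rule sum.remove[OF fin that, THEN trans])
        (auto intro!: sum.neutral simp: L_zero[OF that] eq_commute[of i])
    also have "\<dots> = v i" using L_nonzero[OF that] by simp
    finally show ?thesis .
  qed
  ultimately show ?thesis by blast
qed

lemma inj_on_mesh:
  fixes \<theta> :: "int \<Rightarrow> real"
  assumes "strict_mono_on {- int N..int N} \<theta>"
  shows "inj_on (\<lambda>i. complex_of_real (\<theta> i)) {- int N..int N}"
  using strict_mono_on_imp_inj_on[OF assms] by (auto simp: inj_on_def)

lemma poly_eq_on_mesh:
  fixes p q :: "complex poly" and \<theta> :: "int \<Rightarrow> real"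
  assumes mono: "strict_mono_on {- int N..int N} \<theta>"
    and "degree p \<le> 2 * N" "degree q \<le> 2 * N"
    and "\<And>i. i \<in> {- int N..int N} \<Longrightarrow> poly p (of_real (\<theta> i)) = poly q (of_real (\<theta> i))"
  shows "p = q"
proof (rule poly_eqI_degree)
  show "card ((\<lambda>i. complex_of_real (\<theta> i)) ` {- int N..int N}) > degree p"
    "card ((\<lambda>i. complex_of_real (\<theta> i)) ` {- int N..int N}) > degree q"
    using assms card_image[OF inj_on_mesh[OF mono]] by auto
qed (use assms in auto)

lemma interp_ex1:
  fixes x :: "int \<Rightarrow> nat \<Rightarrow> complex"
  assumes "strict_mono_on {- int N..int N} \<theta>"
  shows "\<exists>!p. degree p \<le> 2 * N \<and> (\<forall>i\<in>{- int N..int N}. poly p (of_real (\<theta> i)) = x i c)"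
proof (rule ex_ex1I)
  show "\<exists>p. degree p \<le> 2 * N \<and> (\<forall>i\<in>{- int N..int N}. poly p (of_real (\<theta> i)) = x i c)"
    using interpolating_poly_exists[OF _ inj_on_mesh[OF assms], of "\<lambda>i. x i c"]
    by (simp add: nat_add_distrib nat_mult_distrib)
qed (use poly_eq_on_mesh[OF assms] in auto)

lemma
  assumes "strict_mono_on {- int N..int N} \<theta>"
  shows degree_interp: "degree (interp N \<theta> x c) \<le> 2 * N"
    and poly_interp: "i \<in> {- int N..int N} \<Longrightarrow> poly (interp N \<theta> x c) (of_real (\<theta> i)) = x i c"
  using theI'[OF interp_ex1[OF assms, of x c]] unfolding interp_def by auto

lemma interp_eqI:
  assumes "strict_mono_on {- int N..int N} \<theta>" and "degree p \<le> 2 * N"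
    and "\<And>i. i \<in> {- int N..int N} \<Longrightarrow> poly p (of_real (\<theta> i)) = x i c"
  shows "interp N \<theta> x c = p"
  unfolding interp_def using assms by (intro the1_equality[OF interp_ex1]) auto

lemma interp_cong:
  assumes "\<And>i. i \<in> {- int N..int N} \<Longrightarrow> x i c = y i c"
  shows "interp N \<theta> x c = interp N \<theta> y c"
  unfolding interp_def using assms by simp

lemma interp_sum:
  assumes mono: "strict_mono_on {- int N..int N} \<theta>" and "finite S"
  shows "interp N \<theta> (\<lambda>i c. \<Sum>s\<in>S. w s * u s i c) c = (\<Sum>s\<in>S. smult (w s) (interp N \<theta> (u s) c))"
  using assms
  by (intro interp_eqI[OF mono])
    (auto simp: poly_sum poly_interp intro!: degree_sum_le order_trans[OF degree_smult_le] degree_interp)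

lemma interp_cnj:
  assumes "strict_mono_on {- int N..int N} \<theta>"
  shows "interp N \<theta> (\<lambda>i c. cnj (x i c)) c = map_poly cnj (interp N \<theta> x c)"
  using assms by (intro interp_eqI) (auto simp: degree_map_poly degree_interp poly_interp poly_cnj[symmetric])

section \<open>The collocation operator as a matrix\<close>

lemma Lop_cong:
  assumes "\<And>i d. i \<in> {- int N..int N} \<Longrightarrow> d < 2 * n \<Longrightarrow> x i d = y i d" and "c < 2 * n"
  shows "Lop n m A B C D \<tau> \<xi> N \<theta> x j c = Lop n m A B C D \<tau> \<xi> N \<theta> y j c"
proof -
  have "interp N \<theta> x d = interp N \<theta> y d" if "d < 2 * n" for d
    using assms(1) that by (intro interp_cong) auto
  with assms(2) show ?thesis unfolding Lop_def by (auto intro!: sum.cong)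
qed

lemma Lop_sum:
  assumes "strict_mono_on {- int N..int N} \<theta>" and "finite S"
  shows "Lop n m A B C D \<tau> \<xi> N \<theta> (\<lambda>i c. \<Sum>s\<in>S. w s * u s i c) j c
    = (\<Sum>s\<in>S. w s * Lop n m A B C D \<tau> \<xi> N \<theta> (u s) j c)"
  unfolding Lop_def Let_def interp_sum[OF assms]
  by (simp add: poly_sum pderiv_sum pderiv_smult sum_distrib_left sum.distrib distrib_left
      mult.left_commute sum.swap[of _ S])

lemma Lop_cnj:
  assumes "strict_mono_on {- int N..int N} \<theta>"
  shows "Lop n m A B C D \<tau> \<xi> N \<theta> (\<lambda>i c. cnj (x i c)) j c = cnj (Lop n m A B C D \<tau> \<xi> N \<theta> x j c)"
  unfolding Lop_def Let_def interp_cnj[OF assms]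
  by (simp add: poly_cnj[symmetric] pderiv_map_poly_cnj)

lemma smult_mat_mult_vec:
  fixes z :: "'a::comm_ring_1"
  assumes "A \<in> carrier_mat nr nc" and "v \<in> carrier_vec nc"
  shows "(z \<cdot>\<^sub>m A) *\<^sub>v v = z \<cdot>\<^sub>v (A *\<^sub>v v)"
  using assms by (intro eq_vecI) (auto simp: smult_scalar_prod_distrib[of _ nc])

definition coord :: "nat \<Rightarrow> nat \<Rightarrow> int \<Rightarrow> nat \<Rightarrow> nat" where
  "coord n N i c = nat (i + int N) * (2 * n) + c"

lemma
  assumes "n > 0" "i \<in> {- int N..int N}" "c < 2 * n"
  shows coord_less: "coord n N i c < (2 * N + 1) * (2 * n)"
    and blk_coord: "blk n N (coord n N i c) = i"
    and coord_mod: "coord n N i c mod (2 * n) = c"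
proof -
  have "nat (i + int N) \<le> 2 * N" using assms by auto
  then have "nat (i + int N) * (2 * n) + c < 2 * N * (2 * n) + 2 * n"
    using mult_le_mono1[of "nat (i + int N)" "2 * N" "2 * n"] assms by linarith
  then show "coord n N i c < (2 * N + 1) * (2 * n)" unfolding coord_def by (simp add: algebra_simps)
  show "coord n N i c mod (2 * n) = c" unfolding coord_def using assms by simp
  have "coord n N i c div (2 * n) = nat (i + int N)" unfolding coord_def using assms by simp
  then show "blk n N (coord n N i c) = i" unfolding blk_def using assms by simp
qed

lemma
  assumes "n > 0" "r < (2 * N + 1) * (2 * n)"
  shows blk_mem: "blk n N r \<in> {- int N..int N}"
    and coord_blk: "coord n N (blk n N r) (r mod (2 * n)) = r"
proof -
  have "r div (2 * n) < 2 * N + 1" using assms by (simp add: less_mult_imp_div_less)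
  then show "blk n N r \<in> {- int N..int N}" unfolding blk_def by auto
  show "coord n N (blk n N r) (r mod (2 * n)) = r" unfolding coord_def blk_def
    using div_mult_mod_eq[of r "2 * n"] by simp
qed

lemma all_coord_iff:
  assumes "n > 0"
  shows "(\<forall>r<(2 * N + 1) * (2 * n). P r) \<longleftrightarrow> (\<forall>i\<in>{- int N..int N}. \<forall>c<2 * n. P (coord n N i c))"
proof
  assume "\<forall>i\<in>{- int N..int N}. \<forall>c<2 * n. P (coord n N i c)"
  moreover have "r mod (2 * n) < 2 * n" for r using assms by simp
  ultimately show "\<forall>r<(2 * N + 1) * (2 * n). P r" using assms blk_mem coord_blk by metis
qed (use assms coord_less in auto)

lemma sum_unitX:
  assumes "n > 0" "i \<in> {- int N..int N}" "c < 2 * n"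
  shows "(\<Sum>s<(2 * N + 1) * (2 * n). w s * unitX n N s i c) = w (coord n N i c)"
proof -
  have "unitX n N s i c = (if s = coord n N i c then 1 else 0)" if "s < (2 * N + 1) * (2 * n)" for s
    using assms that blk_coord coord_mod coord_blk[OF assms(1) that] unfolding unitX_def by metis
  then have "(\<Sum>s<(2 * N + 1) * (2 * n). w s * unitX n N s i c)
      = (\<Sum>s<(2 * N + 1) * (2 * n). if s = coord n N i c then w s else 0)"
    by (intro sum.cong) auto
  then show ?thesis using coord_less[OF assms] by simp
qed

section \<open>Symplectic adjoints and the Hamiltonian structure of \<open>M\<^sub>0\<close>\<close>

definition symp_sign :: "nat \<Rightarrow> nat \<Rightarrow> 'a::ring_1" where
  "symp_sign n c = (if c < n then - 1 else 1)"

definition symp_swap :: "nat \<Rightarrow> nat \<Rightarrow> nat" where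
  "symp_swap n c = (if c < n then c + n else c - n)"

(* symplectic_adjoint n P = J P^T J^T for J = [[0, I_n], [-I_n, 0]], whose only nonzero entries
   are J_{c, symp_swap n c} = - symp_sign n c; P is Hamiltonian iff symplectic_adjoint n P = - P. *)
definition symplectic_adjoint :: "nat \<Rightarrow> 'a::ring_1 mat \<Rightarrow> 'a mat" where
  "symplectic_adjoint n P = mat (2 * n) (2 * n)
     (\<lambda>(c, d). symp_sign n c * symp_sign n d * P $$ (symp_swap n d, symp_swap n c))"

lemma
  assumes "c < 2 * n"
  shows symp_swap_less: "symp_swap n c < 2 * n"
    and symp_swap_swap: "symp_swap n (symp_swap n c) = c"
  using assms by (auto simp: symp_swap_def)

lemma symp_sign_nonzero [simp]: "symp_sign n c \<noteq> (0 :: 'a::ring_1)"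
  by (simp add: symp_sign_def)

lemma symp_sign_square [simp]:
  "symp_sign n c * symp_sign n c = (1 :: 'a::ring_1)"
  "symp_sign n c * (symp_sign n c * x) = (x :: 'a::ring_1)"
  by (simp_all add: symp_sign_def)

lemma sum_symp_swap: "(\<Sum>d<2 * n. h (symp_swap n d)) = (\<Sum>d<2 * n. h d)"
  by (rule sum.reindex_bij_witness[where i = "symp_swap n" and j = "symp_swap n"])
    (auto simp: symp_swap_less symp_swap_swap)

lemma symplectic_adjoint_carrier [simp]: "symplectic_adjoint n P \<in> carrier_mat (2 * n) (2 * n)"
  by (simp add: symplectic_adjoint_def)

lemma dim_symplectic_adjoint [simp]:
  "dim_row (symplectic_adjoint n P) = 2 * n" "dim_col (symplectic_adjoint n P) = 2 * n"
  by (simp_all add: symplectic_adjoint_def)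

lemma index_symplectic_adjoint:
  "c < 2 * n \<Longrightarrow> d < 2 * n \<Longrightarrow>
    symplectic_adjoint n P $$ (c, d) = symp_sign n c * symp_sign n d * P $$ (symp_swap n d, symp_swap n c)"
  by (simp add: symplectic_adjoint_def)

lemma det_symplectic_adjoint_eq_0:
  fixes H :: "'a::field mat"
  assumes H: "H \<in> carrier_mat (2 * n) (2 * n)" and "det H = 0"
  shows "det (symplectic_adjoint n H) = 0"
proof -
  have "det (transpose_mat H) = 0" using assms by (simp add: det_transpose)
  then obtain u where u: "u \<in> carrier_vec (2 * n)" "u \<noteq> 0\<^sub>v (2 * n)" "transpose_mat H *\<^sub>v u = 0\<^sub>v (2 * n)"
    using det_0_iff_vec_prod_zero[of "transpose_mat H" "2 * n"] H by auto
  define v where "v = vec (2 * n) (\<lambda>d. symp_sign n d * u $ symp_swap n d)"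
  have "(symplectic_adjoint n H *\<^sub>v v) $ c = 0" if c: "c < 2 * n" for c
  proof -
    have "(symplectic_adjoint n H *\<^sub>v v) $ c
        = (\<Sum>d<2 * n. symp_sign n c * symp_sign n d * H $$ (symp_swap n d, symp_swap n c)
                       * (symp_sign n d * u $ symp_swap n d))"
      using c by (simp add: symplectic_adjoint_def v_def scalar_prod_def atLeast0LessThan)
    also have "\<dots> = symp_sign n c * (\<Sum>d<2 * n. H $$ (symp_swap n d, symp_swap n c) * u $ symp_swap n d)"
      by (simp add: sum_distrib_left algebra_simps)
    also have "(\<Sum>d<2 * n. H $$ (symp_swap n d, symp_swap n c) * u $ symp_swap n d)
        = (\<Sum>e<2 * n. H $$ (e, symp_swap n c) * u $ e)"
      by (rule sum_symp_swap)
    also have "\<dots> = (transpose_mat H *\<^sub>v u) $ symp_swap n c"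
      using H u(1) symp_swap_less[OF c] by (simp add: scalar_prod_def atLeast0LessThan)
    finally show ?thesis using u(3) symp_swap_less[OF c] by simp
  qed
  then have "symplectic_adjoint n H *\<^sub>v v = 0\<^sub>v (2 * n)" by (intro eq_vecI) auto
  moreover have "v \<in> carrier_vec (2 * n)" by (simp add: v_def)
  moreover have "v \<noteq> 0\<^sub>v (2 * n)"
  proof
    assume v0: "v = 0\<^sub>v (2 * n)"
    have "u $ e = 0" if "e < 2 * n" for e
      using arg_cong[OF v0, of "\<lambda>w. w $ symp_swap n e"] that
      by (simp add: v_def symp_swap_less symp_swap_swap)
    with u(1,2) show False by (metis eq_vecI carrier_vecD index_zero_vec)
  qed
  ultimately show ?thesis
    using det_0_iff_vec_prod_zero[OF symplectic_adjoint_carrier, of n H] by blast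
qed

lemma symplectic_adjoint_four_block_mat:
  fixes X Y Z W :: "'a::comm_ring_1 mat"
  assumes X: "X \<in> carrier_mat n n" and Y: "Y \<in> carrier_mat n n" and Z: "Z \<in> carrier_mat n n"
    and Ys: "transpose_mat Y = Y" and Zs: "transpose_mat Z = Z" and W: "W = - transpose_mat X"
  shows "symplectic_adjoint n (four_block_mat X Y Z W) = - four_block_mat X Y Z W"
proof (rule eq_matI)
  have Y_entry: "Y $$ (i, j) = Y $$ (j, i)" if "i < n" "j < n" for i j
    using arg_cong[OF Ys, of "\<lambda>M. M $$ (i, j)"] that Y by simp
  have Z_entry: "Z $$ (i, j) = Z $$ (j, i)" if "i < n" "j < n" for i j
    using arg_cong[OF Zs, of "\<lambda>M. M $$ (i, j)"] that Z by simp
  fix c d assume "c < dim_row (- four_block_mat X Y Z W)" "d < dim_col (- four_block_mat X Y Z W)"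
  then have c: "c < 2 * n" and d: "d < 2 * n" using X Y Z W by auto
  show "symplectic_adjoint n (four_block_mat X Y Z W) $$ (c, d) = (- four_block_mat X Y Z W) $$ (c, d)"
    using X Y Z W c d Y_entry[of c "d - n"] Y_entry[of "d - n" c] Z_entry[of "c - n" d] Z_entry[of d "c - n"]
    by (auto simp: index_symplectic_adjoint symp_sign_def symp_swap_def)
qed (use X Y Z W in auto)

lemma symplectic_adjoint_Mplus:
  assumes "Ai \<in> carrier_mat n n"
  shows "symplectic_adjoint n (Mplus Ai) = - Mminus Ai"
  using assms unfolding Mplus_def Mminus_def
  by (intro eq_matI) (auto simp: index_symplectic_adjoint symp_sign_def symp_swap_def)

lemma symplectic_adjoint_Mminus:
  assumes "Ai \<in> carrier_mat n n"
  shows "symplectic_adjoint n (Mminus Ai) = - Mplus Ai"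
  using assms unfolding Mplus_def Mminus_def
  by (intro eq_matI) (auto simp: index_symplectic_adjoint symp_sign_def symp_swap_def)

lemma of_real_symp_sign [simp]: "of_real (symp_sign n c) = (symp_sign n c :: 'a::real_algebra_1)"
  by (simp add: symp_sign_def)

lemma index_symplectic_adjoint_eq_uminus:
  fixes P Q :: "'a::ring_1 mat"
  assumes adj: "symplectic_adjoint n P = - Q" and c: "c < 2 * n" and d: "d < 2 * n"
  shows "symp_sign n c * symp_sign n d * P $$ (symp_swap n d, symp_swap n c) = - Q $$ (c, d)"
proof -
  have "dim_row Q = 2 * n" "dim_col Q = 2 * n"
    using arg_cong[OF adj, of dim_row] arg_cong[OF adj, of dim_col] by simp_all
  then show ?thesis using arg_cong[OF adj, of "\<lambda>M. M $$ (c, d)"] c d by (simp add: index_symplectic_adjoint)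
qed

lemma
  fixes X :: "real mat"
  assumes X: "X \<in> carrier_mat k k" and det: "det X \<noteq> 0"
  shows minv_carrier: "minv X \<in> carrier_mat k k"
    and minv_mult: "minv X * X = 1\<^sub>m k"
proof -
  obtain Xi where Xi: "mat_inverse X = Some Xi"
  proof (cases "mat_inverse X")
    case None
    with mat_inverse(1)[OF X None, of "()"] det_non_zero_imp_unit[OF X det, where b = "()"]
    show ?thesis by blast
  qed
  then show "minv X \<in> carrier_mat k k" "minv X * X = 1\<^sub>m k"
    using mat_inverse(2)[OF X Xi] unfolding minv_def by auto
qed

lemma transpose_minv:
  fixes X :: "real mat"
  assumes X: "X \<in> carrier_mat k k" and det: "det X \<noteq> 0" and sym: "transpose_mat X = X"
  shows "transpose_mat (minv X) = minv X"
proof -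
  note Xi = minv_carrier[OF X det] minv_mult[OF X det]
  have "X * transpose_mat (minv X) = transpose_mat (minv X * X)"
    using transpose_mult[OF Xi(1) X] sym by simp
  also have "\<dots> = 1\<^sub>m k" using Xi by simp
  finally have X_Xit: "X * transpose_mat (minv X) = 1\<^sub>m k" .
  have "minv X = minv X * (X * transpose_mat (minv X))" using X_Xit Xi by simp
  also have "\<dots> = (minv X * X) * transpose_mat (minv X)"
    by (rule assoc_mult_mat[symmetric]) (use Xi X in auto)
  also have "\<dots> = transpose_mat (minv X)" using Xi by simp
  finally show ?thesis by simp
qed

lemma transpose_congruence:
  fixes P S :: "'a::comm_ring_1 mat"
  assumes P: "P \<in> carrier_mat a b" and S: "S \<in> carrier_mat b b" and sym: "transpose_mat S = S"
  shows "transpose_mat (P * S * transpose_mat P) = P * S * transpose_mat P"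
proof -
  have "transpose_mat (P * S * transpose_mat P) = transpose_mat (transpose_mat P) * transpose_mat (P * S)"
    by (rule transpose_mult[of _ a b]) (use P S in auto)
  also have "transpose_mat (P * S) = transpose_mat S * transpose_mat P"
    by (rule transpose_mult) (use P S in auto)
  finally show ?thesis using P S sym by (simp add: assoc_mult_mat[of _ a b])
qed

lemma transpose_mult4_symmetric:
  fixes P S Q R :: "'a::comm_ring_1 mat"
  assumes P: "P \<in> carrier_mat a b" and S: "S \<in> carrier_mat b b" and Q: "Q \<in> carrier_mat b c"
    and R: "R \<in> carrier_mat c d" and sym: "transpose_mat S = S"
  shows "transpose_mat (P * S * Q * R) = transpose_mat R * transpose_mat Q * S * transpose_mat P"
proof -
  have "transpose_mat (P * S * Q * R) = transpose_mat R * transpose_mat (P * S * Q)"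
    by (rule transpose_mult) (use P S Q R in auto)
  also have "transpose_mat (P * S * Q) = transpose_mat Q * transpose_mat (P * S)"
    by (rule transpose_mult) (use P S Q in auto)
  also have "transpose_mat (P * S) = S * transpose_mat P"
    using transpose_mult[OF P S] sym by simp
  finally show ?thesis using P S Q R
    by (simp add: assoc_mult_mat[of _ d c _ b _ a] assoc_mult_mat[of _ d b _ b _ a])
qed

lemma Dxi_carrier: "D \<in> carrier_mat ny nu \<Longrightarrow> Dxi D \<xi> \<in> carrier_mat nu nu"
  unfolding Dxi_def by auto

lemma Dtxi_carrier: "D \<in> carrier_mat ny nu \<Longrightarrow> Dtxi D \<xi> \<in> carrier_mat ny ny"
  unfolding Dtxi_def by auto

lemma transpose_Dxi: "D \<in> carrier_mat ny nu \<Longrightarrow> transpose_mat (Dxi D \<xi>) = Dxi D \<xi>"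
  unfolding Dxi_def by (intro eq_matI) (auto simp: comm_scalar_prod[of _ ny])

lemma transpose_Dtxi: "D \<in> carrier_mat ny nu \<Longrightarrow> transpose_mat (Dtxi D \<xi>) = Dtxi D \<xi>"
  unfolding Dtxi_def by (intro eq_matI) (auto simp: comm_scalar_prod[of _ nu])

lemma det_Dtxi_nonzero:
  assumes D: "D \<in> carrier_mat ny nu" and "\<xi> \<noteq> 0" and det: "det (Dxi D \<xi>) \<noteq> 0"
  shows "det (Dtxi D \<xi>) \<noteq> 0"
proof
  assume "det (Dtxi D \<xi>) = 0"
  then obtain v where v: "v \<in> carrier_vec ny" "v \<noteq> 0\<^sub>v ny" "Dtxi D \<xi> *\<^sub>v v = 0\<^sub>v ny"
    using det_0_iff_vec_prod_zero[OF Dtxi_carrier[OF D]] by auto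
  define u where "u = transpose_mat D *\<^sub>v v"
  have u: "u \<in> carrier_vec nu" unfolding u_def using D v by auto
  have "Dtxi D \<xi> *\<^sub>v v = D *\<^sub>v u - (\<xi>^2) \<cdot>\<^sub>v v"
    unfolding Dtxi_def u_def using D v
    by (simp add: minus_mult_distrib_mat_vec[of _ ny ny] smult_mat_mult_vec[of _ ny ny])
  with v(3) have Du_diff: "D *\<^sub>v u - (\<xi>^2) \<cdot>\<^sub>v v = 0\<^sub>v ny" by simp
  have Du: "D *\<^sub>v u = (\<xi>^2) \<cdot>\<^sub>v v"
  proof (rule eq_vecI)
    fix i assume "i < dim_vec ((\<xi>^2) \<cdot>\<^sub>v v)"
    then show "(D *\<^sub>v u) $ i = ((\<xi>^2) \<cdot>\<^sub>v v) $ i"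
      using arg_cong[OF Du_diff, of "\<lambda>w. w $ i"] D u v(1) by simp
  qed (use D v(1) in simp)
  have "Dxi D \<xi> *\<^sub>v u = transpose_mat D *\<^sub>v (D *\<^sub>v u) - (\<xi>^2) \<cdot>\<^sub>v u"
    unfolding Dxi_def using D u
    by (simp add: minus_mult_distrib_mat_vec[of _ nu nu] smult_mat_mult_vec[of _ nu nu])
  also have "transpose_mat D *\<^sub>v (D *\<^sub>v u) = transpose_mat D *\<^sub>v ((\<xi>^2) \<cdot>\<^sub>v v)"
    by (simp only: Du)
  also have "\<dots> = (\<xi>^2) \<cdot>\<^sub>v u"
    unfolding u_def using D v by (intro mult_mat_vec) auto
  finally have "Dxi D \<xi> *\<^sub>v u = 0\<^sub>v nu" using u by auto
  moreover have "u \<noteq> 0\<^sub>v nu"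
  proof
    assume "u = 0\<^sub>v nu"
    then have "v $ i = 0" if "i < ny" for i
      using arg_cong[OF Du, of "\<lambda>w. w $ i"] \<open>\<xi> \<noteq> 0\<close> D v(1) that by simp
    then have "v = 0\<^sub>v ny" using v(1) by (intro eq_vecI) auto
    with v(2) show False ..
  qed
  ultimately show False
    using det det_0_iff_vec_prod_zero[OF Dxi_carrier[OF D]] u by auto
qed

lemma symplectic_adjoint_M0:
  assumes A0: "A0 \<in> carrier_mat n n" and B: "B \<in> carrier_mat n nu" and C: "C \<in> carrier_mat ny n"
    and D: "D \<in> carrier_mat ny nu" and "\<xi> \<noteq> 0" and det: "det (Dxi D \<xi>) \<noteq> 0"
  shows "symplectic_adjoint n (M0 A0 B C D \<xi>) = - M0 A0 B C D \<xi>"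
proof -
  define Di where "Di = minv (Dxi D \<xi>)"
  define Dti where "Dti = minv (Dtxi D \<xi>)"
  have Di: "Di \<in> carrier_mat nu nu" "transpose_mat Di = Di"
    unfolding Di_def using Dxi_carrier[OF D] det transpose_Dxi[OF D]
    by (auto intro: minv_carrier transpose_minv)
  have Dti: "Dti \<in> carrier_mat ny ny" "transpose_mat Dti = Dti"
    unfolding Dti_def using Dtxi_carrier[OF D] det_Dtxi_nonzero[OF D \<open>\<xi> \<noteq> 0\<close> det] transpose_Dtxi[OF D]
    by (auto intro: minv_carrier transpose_minv)
  have Y: "transpose_mat (- (B * Di * transpose_mat B)) = - (B * Di * transpose_mat B)"
    using transpose_congruence[OF B Di] by (simp add: transpose_uminus)
  have "transpose_mat (transpose_mat C * Dti * C) = transpose_mat C * Dti * C"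
    using transpose_congruence[of "transpose_mat C" n ny, OF _ Dti] C by simp
  then have Z: "transpose_mat ((\<xi>^2) \<cdot>\<^sub>m (transpose_mat C * Dti * C)) = (\<xi>^2) \<cdot>\<^sub>m (transpose_mat C * Dti * C)"
    by (metis (no_types) index_transpose_mat index_smult_mat eq_matI)
  have BDC: "transpose_mat (B * Di * transpose_mat D * C) = transpose_mat C * D * Di * transpose_mat B"
    using transpose_mult4_symmetric[OF B Di(1) _ C Di(2), of "transpose_mat D"] D by simp
  have "(transpose_mat C * D * Di * transpose_mat B) $$ (i, j) = (B * Di * transpose_mat D * C) $$ (j, i)"
    if "i < n" "j < n" for i j
    using arg_cong[OF BDC, of "\<lambda>M. M $$ (i, j)"] that B C D Di by simp
  then have W: "- transpose_mat A0 + transpose_mat C * D * Di * transpose_mat B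
      = - transpose_mat (A0 - B * Di * transpose_mat D * C)"
    using A0 B C D Di by (intro eq_matI) auto
  show ?thesis unfolding M0_def Di_def[symmetric] Dti_def[symmetric]
    by (rule symplectic_adjoint_four_block_mat[OF _ _ _ Y Z W]) (use A0 B C D Di Dti in auto)
qed

section \<open>Eigenvalues of the collocation operator\<close>

locale collocation =
  fixes n m :: nat and A :: "nat \<Rightarrow> real mat" and B C D :: "real mat"
    and \<tau> :: "nat \<Rightarrow> real" and \<xi> :: real and N :: nat and \<theta> :: "int \<Rightarrow> real"
  assumes n_pos: "n > 0"
    and mesh_mono: "strict_mono_on {- int N..int N} \<theta>"
begin

abbreviation L :: "(int \<Rightarrow> nat \<Rightarrow> complex) \<Rightarrow> int \<Rightarrow> nat \<Rightarrow> complex" where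
  "L \<equiv> Lop n m A B C D \<tau> \<xi> N \<theta>"

definition Lop_eigenvalue :: "complex \<Rightarrow> bool" where
  "Lop_eigenvalue z \<longleftrightarrow> (\<exists>x. (\<exists>i\<in>{- int N..int N}. \<exists>c<2 * n. x i c \<noteq> 0) \<and>
     (\<forall>i\<in>{- int N..int N}. \<forall>c<2 * n. L x i c = z * x i c))"

lemma LN_mult_vec:
  assumes v: "v \<in> carrier_vec ((2 * N + 1) * (2 * n))" and r: "r < (2 * N + 1) * (2 * n)"
  shows "(LN n m A B C D \<tau> \<xi> N \<theta> *\<^sub>v v) $ r = L (\<lambda>i c. v $ coord n N i c) (blk n N r) (r mod (2 * n))"
proof -
  have "(LN n m A B C D \<tau> \<xi> N \<theta> *\<^sub>v v) $ r
      = (\<Sum>s<(2 * N + 1) * (2 * n). v $ s * L (unitX n N s) (blk n N r) (r mod (2 * n)))"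
    using v r unfolding LN_def by (simp add: scalar_prod_def atLeast0LessThan mult.commute)
  also have "\<dots> = L (\<lambda>i c. \<Sum>s<(2 * N + 1) * (2 * n). v $ s * unitX n N s i c) (blk n N r) (r mod (2 * n))"
    by (rule Lop_sum[OF mesh_mono, symmetric]) simp
  also have "\<dots> = L (\<lambda>i c. v $ coord n N i c) (blk n N r) (r mod (2 * n))"
    by (rule Lop_cong) (use sum_unitX n_pos in auto)
  finally show ?thesis .
qed

lemma char_LN_mult_vec_eq_0_iff:
  assumes v: "v \<in> carrier_vec ((2 * N + 1) * (2 * n))"
  shows "(z \<cdot>\<^sub>m 1\<^sub>m ((2 * N + 1) * (2 * n)) - LN n m A B C D \<tau> \<xi> N \<theta>) *\<^sub>v v = 0\<^sub>v ((2 * N + 1) * (2 * n))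
    \<longleftrightarrow> (\<forall>i\<in>{- int N..int N}. \<forall>c<2 * n. L (\<lambda>i c. v $ coord n N i c) i c = z * v $ coord n N i c)"
proof -
  let ?K = "(2 * N + 1) * (2 * n)"
  let ?LN = "LN n m A B C D \<tau> \<xi> N \<theta>"
  have LN: "?LN \<in> carrier_mat ?K ?K" unfolding LN_def by simp
  have "(z \<cdot>\<^sub>m 1\<^sub>m ?K - ?LN) *\<^sub>v v = (z \<cdot>\<^sub>m 1\<^sub>m ?K) *\<^sub>v v - ?LN *\<^sub>v v"
    by (rule minus_mult_distrib_mat_vec) (use LN v in auto)
  also have "(z \<cdot>\<^sub>m 1\<^sub>m ?K) *\<^sub>v v = z \<cdot>\<^sub>v v"
    using smult_mat_mult_vec[of "1\<^sub>m ?K" ?K ?K v z] v by simp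
  finally have "(z \<cdot>\<^sub>m 1\<^sub>m ?K - ?LN) *\<^sub>v v = z \<cdot>\<^sub>v v - ?LN *\<^sub>v v" .
  then have "(z \<cdot>\<^sub>m 1\<^sub>m ?K - ?LN) *\<^sub>v v = 0\<^sub>v ?K \<longleftrightarrow> (\<forall>r<?K. (?LN *\<^sub>v v) $ r = z * v $ r)"
    using LN v by (auto simp: vec_eq_iff)
  also have "\<dots> \<longleftrightarrow>
      (\<forall>i\<in>{- int N..int N}. \<forall>c<2 * n. (?LN *\<^sub>v v) $ coord n N i c = z * v $ coord n N i c)"
    by (rule all_coord_iff[OF n_pos])
  also have "\<dots> \<longleftrightarrow>
      (\<forall>i\<in>{- int N..int N}. \<forall>c<2 * n. L (\<lambda>i c. v $ coord n N i c) i c = z * v $ coord n N i c)"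
    using LN_mult_vec[OF v coord_less[OF n_pos]] n_pos by (auto simp: blk_coord coord_mod)
  finally show ?thesis .
qed

lemma det_char_LN_eq_0_iff:
  "det (z \<cdot>\<^sub>m 1\<^sub>m ((2 * N + 1) * (2 * n)) - LN n m A B C D \<tau> \<xi> N \<theta>) = 0 \<longleftrightarrow> Lop_eigenvalue z"
proof -
  let ?K = "(2 * N + 1) * (2 * n)"
  let ?LN = "LN n m A B C D \<tau> \<xi> N \<theta>"
  have LN: "?LN \<in> carrier_mat ?K ?K" unfolding LN_def by simp
  have char_LN: "z \<cdot>\<^sub>m 1\<^sub>m ?K - ?LN \<in> carrier_mat ?K ?K" using LN by (intro minus_carrier_mat) auto
  show ?thesis
  proof
    assume "det (z \<cdot>\<^sub>m 1\<^sub>m ?K - ?LN) = 0"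
    then obtain v where v: "v \<in> carrier_vec ?K" "v \<noteq> 0\<^sub>v ?K" "(z \<cdot>\<^sub>m 1\<^sub>m ?K - ?LN) *\<^sub>v v = 0\<^sub>v ?K"
      using det_0_iff_vec_prod_zero[OF char_LN] by auto
    have "\<not> (\<forall>r<?K. v $ r = 0)" using v(1,2) by (metis eq_vecI carrier_vecD index_zero_vec)
    then have "\<exists>i\<in>{- int N..int N}. \<exists>c<2 * n. v $ coord n N i c \<noteq> 0"
      unfolding all_coord_iff[OF n_pos] by blast
    then show "Lop_eigenvalue z" unfolding Lop_eigenvalue_def
      using char_LN_mult_vec_eq_0_iff v by (intro exI[of _ "\<lambda>i c. v $ coord n N i c"]) blast
  next
    assume "Lop_eigenvalue z"
    then obtain x where x0: "\<exists>i\<in>{- int N..int N}. \<exists>c<2 * n. x i c \<noteq> 0"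
      and eig: "\<forall>i\<in>{- int N..int N}. \<forall>c<2 * n. L x i c = z * x i c"
      unfolding Lop_eigenvalue_def by blast
    define v where "v = vec ?K (\<lambda>r. x (blk n N r) (r mod (2 * n)))"
    have v: "v \<in> carrier_vec ?K" unfolding v_def by simp
    have v_coord: "v $ coord n N i c = x i c" if "i \<in> {- int N..int N}" "c < 2 * n" for i c
      unfolding v_def index_vec[OF coord_less[OF n_pos that]]
      using blk_coord[OF n_pos that] coord_mod[OF n_pos that] by simp
    have "(z \<cdot>\<^sub>m 1\<^sub>m ?K - ?LN) *\<^sub>v v = 0\<^sub>v ?K"
      unfolding char_LN_mult_vec_eq_0_iff[OF v] using eig v_coord Lop_cong[of N n "\<lambda>i c. v $ coord n N i c" x] by simp
    moreover have "v \<noteq> 0\<^sub>v ?K" using x0 v_coord n_pos coord_less by (metis index_zero_vec(1))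
    ultimately show "det (z \<cdot>\<^sub>m 1\<^sub>m ?K - ?LN) = 0" using det_0_iff_vec_prod_zero[OF char_LN] v by blast
  qed
qed

lemma Lop_eigenvalue_cnj:
  assumes "Lop_eigenvalue z"
  shows "Lop_eigenvalue (cnj z)"
proof -
  obtain x where "\<exists>i\<in>{- int N..int N}. \<exists>c<2 * n. x i c \<noteq> 0"
    and "\<forall>i\<in>{- int N..int N}. \<forall>c<2 * n. L x i c = z * x i c"
    using assms unfolding Lop_eigenvalue_def by blast
  then show ?thesis unfolding Lop_eigenvalue_def
    by (intro exI[of _ "\<lambda>i c. cnj (x i c)"]) (auto simp: Lop_cnj[OF mesh_mono])
qed

definition node_poly :: "complex poly" where
  "node_poly = (\<Prod>i\<in>{- int N..int N} - {0}. [:- of_real (\<theta> i), 1:])"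

lemma degree_node_poly: "degree node_poly = 2 * N"
proof -
  have "degree node_poly = (\<Sum>i\<in>{- int N..int N} - {0}. degree [:- complex_of_real (\<theta> i), 1:])"
    unfolding node_poly_def by (rule degree_prod_sum_eq) simp
  then show ?thesis by simp
qed

lemma coeff_node_poly: "coeff node_poly (2 * N) = 1"
proof -
  have "lead_coeff node_poly = 1" unfolding node_poly_def lead_coeff_prod by simp
  then show ?thesis using degree_node_poly by simp
qed

lemma node_poly_nonzero: "node_poly \<noteq> 0"
  using coeff_node_poly by auto

lemma poly_node_poly:
  "i \<in> {- int N..int N} - {0} \<Longrightarrow> poly node_poly (of_real (\<theta> i)) = 0"
  unfolding node_poly_def poly_prod by (auto intro!: prod_zero)

lemma eq_smult_node_poly:
  assumes "degree q \<le> 2 * N"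
    and "\<And>i. i \<in> {- int N..int N} - {0} \<Longrightarrow> poly q (of_real (\<theta> i)) = 0"
  shows "q = smult (coeff q (2 * N)) node_poly"
proof (rule poly_eqI_degree_lead_coeff[where A = "(\<lambda>i. of_real (\<theta> i)) ` ({- int N..int N} - {0})"])
  have "inj_on (\<lambda>i. complex_of_real (\<theta> i)) ({- int N..int N} - {0})"
    using inj_on_mesh[OF mesh_mono] by (rule inj_on_subset) auto
  then show "2 * N \<le> card ((\<lambda>i. complex_of_real (\<theta> i)) ` ({- int N..int N} - {0}))"
    by (simp add: card_image)
  show "poly q w = poly (smult (coeff q (2 * N)) node_poly) w"
    if "w \<in> (\<lambda>i. of_real (\<theta> i)) ` ({- int N..int N} - {0})" for w
  proof -
    from that obtain i where i: "i \<in> {- int N..int N} - {0}" "w = of_real (\<theta> i)" by blast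
    then show ?thesis using assms(2)[OF i(1)] poly_node_poly[OF i(1)] by simp
  qed
  show "coeff q (2 * N) = coeff (smult (coeff q (2 * N)) node_poly) (2 * N)"
    by (simp add: coeff_node_poly)
  show "degree (smult (coeff q (2 * N)) node_poly) \<le> 2 * N"
    using degree_smult_le[of "coeff q (2 * N)" node_poly] by (simp add: degree_node_poly)
qed (rule assms(1))

lemma eigenvector_interp_ode:
  assumes eig: "\<forall>i\<in>{- int N..int N}. \<forall>c<2 * n. L x i c = z * x i c" and c: "c < 2 * n"
  shows "\<exists>a. pderiv (interp N \<theta> x c) - smult z (interp N \<theta> x c) = smult a node_poly"
proof -
  let ?p = "interp N \<theta> x c"
  have "pderiv ?p - smult z ?p = smult (coeff (pderiv ?p - smult z ?p) (2 * N)) node_poly"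
  proof (rule eq_smult_node_poly)
    show "degree (pderiv ?p - smult z ?p) \<le> 2 * N"
      using degree_interp[OF mesh_mono, of x c] degree_pderiv[of ?p] degree_smult_le[of z ?p]
      by (intro degree_diff_le) auto
    fix i assume i: "i \<in> {- int N..int N} - {0}"
    then have "poly (pderiv ?p) (of_real (\<theta> i)) = L x i c" unfolding Lop_def by simp
    also have "\<dots> = z * poly ?p (of_real (\<theta> i))"
      using eig c i poly_interp[OF mesh_mono, of i x c] by simp
    finally show "poly (pderiv ?p - smult z ?p) (of_real (\<theta> i)) = 0" by simp
  qed
  then show ?thesis ..
qed

lemma eigenvector_separable:
  assumes "z \<noteq> 0" and nonzero: "\<exists>i\<in>{- int N..int N}. \<exists>c<2 * n. x i c \<noteq> 0"
    and eig: "\<forall>i\<in>{- int N..int N}. \<forall>c<2 * n. L x i c = z * x i c"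
  obtains f a where "pderiv f - smult z f = node_poly" and "degree f \<le> 2 * N"
    and "\<exists>c<2 * n. a c \<noteq> 0" and "\<And>c. c < 2 * n \<Longrightarrow> interp N \<theta> x c = smult (a c) f"
proof -
  define p where "p c = interp N \<theta> x c" for c
  obtain a where p_ode: "\<And>c. c < 2 * n \<Longrightarrow> pderiv (p c) - smult z (p c) = smult (a c) node_poly"
    using eigenvector_interp_ode[OF eig] unfolding p_def by metis
  obtain c0 where c0: "c0 < 2 * n" "a c0 \<noteq> 0"
  proof (rule ccontr)
    assume "\<not> thesis"
    then have "\<And>c. c < 2 * n \<Longrightarrow> a c = 0" using that by blast
    then have "p c = 0" if "c < 2 * n" for c
      using p_ode[OF that] that pderiv_eq_smult_imp_zero[OF _ \<open>z \<noteq> 0\<close>, of "p c"] by simp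
    moreover obtain i c where "i \<in> {- int N..int N}" "c < 2 * n" "x i c \<noteq> 0"
      using nonzero by blast
    ultimately show False using poly_interp[OF mesh_mono, of i x c] unfolding p_def by simp
  qed
  define f where "f = smult (inverse (a c0)) (p c0)"
  have "pderiv f - smult z f = smult (inverse (a c0)) (pderiv (p c0) - smult z (p c0))"
    by (simp add: f_def pderiv_smult smult_diff_right mult.commute)
  also have "\<dots> = node_poly" using p_ode[OF c0(1)] c0(2) by simp
  finally have f_ode: "pderiv f - smult z f = node_poly" .
  have "p c = smult (a c) f" if "c < 2 * n" for c
  proof (rule pderiv_minus_smult_inject[OF _ \<open>z \<noteq> 0\<close>])
    have "pderiv (smult (a c) f) - smult z (smult (a c) f) = smult (a c) (pderiv f - smult z f)"
      by (simp add: pderiv_smult smult_diff_right mult.commute)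
    then show "pderiv (p c) - smult z (p c) = pderiv (smult (a c) f) - smult z (smult (a c) f)"
      using p_ode[OF that] f_ode by simp
  qed
  moreover have "degree f \<le> 2 * N"
    unfolding f_def p_def using degree_interp[OF mesh_mono] degree_smult_le order_trans by blast
  ultimately show thesis using that[OF f_ode] c0 unfolding p_def by blast
qed

(* If every component c of x interpolates a_c f, the equation of L x = z x at theta_0 = 0
   reads boundary_mat z f a = 0. *)
definition boundary_mat :: "complex \<Rightarrow> complex poly \<Rightarrow> complex mat" where
  "boundary_mat z f = mat (2 * n) (2 * n) (\<lambda>(c, d).
     (if c = d then z * poly f 0 else 0)
     - of_real (M0 (A 0) B C D \<xi> $$ (c, d)) * poly f 0
     - (\<Sum>k\<in>{1..m}. of_real (Mplus (A k) $$ (c, d)) * poly f (- of_real (\<tau> k))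
                  + of_real (Mminus (A k) $$ (c, d)) * poly f (of_real (\<tau> k))))"

lemma boundary_mat_carrier: "boundary_mat z f \<in> carrier_mat (2 * n) (2 * n)"
  by (simp add: boundary_mat_def)

lemma boundary_mat_mult_vec:
  assumes sep: "\<And>d. d < 2 * n \<Longrightarrow> interp N \<theta> x d = smult (a d) f" and c: "c < 2 * n"
  shows "(boundary_mat z f *\<^sub>v vec (2 * n) a) $ c = z * a c * poly f 0 - L x 0 c"
proof -
  have "(boundary_mat z f *\<^sub>v vec (2 * n) a) $ c = (\<Sum>d<2 * n. boundary_mat z f $$ (c, d) * a d)"
    using c by (simp add: boundary_mat_def scalar_prod_def atLeast0LessThan)
  also have "\<dots> = (\<Sum>d<2 * n. (if d = c then z * a c * poly f 0 else 0)
      - of_real (M0 (A 0) B C D \<xi> $$ (c, d)) * (a d * poly f 0)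
      - (\<Sum>k\<in>{1..m}. of_real (Mplus (A k) $$ (c, d)) * (a d * poly f (- of_real (\<tau> k)))
                  + of_real (Mminus (A k) $$ (c, d)) * (a d * poly f (of_real (\<tau> k)))))"
    using c by (intro sum.cong) (auto simp: boundary_mat_def algebra_simps sum_distrib_left sum_distrib_right)
  also have "\<dots> = z * a c * poly f 0
      - (\<Sum>d<2 * n. of_real (M0 (A 0) B C D \<xi> $$ (c, d)) * (a d * poly f 0))
      - (\<Sum>d<2 * n. \<Sum>k\<in>{1..m}. of_real (Mplus (A k) $$ (c, d)) * (a d * poly f (- of_real (\<tau> k)))
                  + of_real (Mminus (A k) $$ (c, d)) * (a d * poly f (of_real (\<tau> k))))"
    using c by (simp add: sum_subtractf)
  also have "\<dots> = z * a c * poly f 0 - L x 0 c"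
  proof -
    have "L x 0 c = (\<Sum>d<2 * n. of_real (M0 (A 0) B C D \<xi> $$ (c, d)) * (a d * poly f 0))
      + (\<Sum>k\<in>{1..m}. \<Sum>d<2 * n. of_real (Mplus (A k) $$ (c, d)) * (a d * poly f (- of_real (\<tau> k)))
                  + of_real (Mminus (A k) $$ (c, d)) * (a d * poly f (of_real (\<tau> k))))"
      using sep unfolding Lop_def by (auto intro!: sum.cong arg_cong2[where f = "(+)"])
    also have "(\<Sum>k\<in>{1..m}. \<Sum>d<2 * n. of_real (Mplus (A k) $$ (c, d)) * (a d * poly f (- of_real (\<tau> k)))
                  + of_real (Mminus (A k) $$ (c, d)) * (a d * poly f (of_real (\<tau> k))))
      = (\<Sum>d<2 * n. \<Sum>k\<in>{1..m}. of_real (Mplus (A k) $$ (c, d)) * (a d * poly f (- of_real (\<tau> k)))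
                  + of_real (Mminus (A k) $$ (c, d)) * (a d * poly f (of_real (\<tau> k))))"
      by (rule sum.swap)
    finally show ?thesis by simp
  qed
  finally show ?thesis .
qed

end

section \<open>Symmetric meshes\<close>

locale symmetric_collocation = collocation +
  assumes mesh_symmetric: "i \<in> {- int N..int N} \<Longrightarrow> \<theta> (- i) = - \<theta> i"
    and adjoint_M0: "symplectic_adjoint n (M0 (A 0) B C D \<xi>) = - M0 (A 0) B C D \<xi>"
    and adjoint_Mplus: "k \<in> {1..m} \<Longrightarrow> symplectic_adjoint n (Mplus (A k)) = - Mminus (A k)"
    and adjoint_Mminus: "k \<in> {1..m} \<Longrightarrow> symplectic_adjoint n (Mminus (A k)) = - Mplus (A k)"
begin

lemma mesh_zero: "\<theta> 0 = 0"
  using mesh_symmetric[of 0] by simp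

lemma point_reflection_collocation:
  assumes ode: "pderiv f - smult z f = node_poly" and i: "i \<in> {- int N..int N} - {0}"
  shows "poly (pderiv (point_reflection f)) (of_real (\<theta> i)) = - z * poly (point_reflection f) (of_real (\<theta> i))"
proof -
  have "poly (pderiv f) w = z * poly f w + poly node_poly w" for w
    using arg_cong[OF ode, of "\<lambda>q. poly q w"] by (simp add: algebra_simps)
  moreover have "poly node_poly (- of_real (\<theta> i)) = 0"
    using poly_node_poly[of "- i"] mesh_symmetric i by auto
  ultimately show ?thesis by (simp add: poly_pderiv_point_reflection)
qed

lemma boundary_mat_symp_swap:
  assumes c: "c < 2 * n" and d: "d < 2 * n"
  shows "symp_sign n c * symp_sign n d * boundary_mat z f $$ (symp_swap n d, symp_swap n c)
    = (if c = d then z * poly f 0 else 0) + of_real (M0 (A 0) B C D \<xi> $$ (c, d)) * poly f 0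
      + (\<Sum>k\<in>{1..m}. of_real (Mminus (A k) $$ (c, d)) * poly f (- of_real (\<tau> k))
        + of_real (Mplus (A k) $$ (c, d)) * poly f (of_real (\<tau> k)))"
proof -
  define s :: complex where "s = symp_sign n c * symp_sign n d"
  have adjoint_entry: "s * of_real (P $$ (symp_swap n d, symp_swap n c)) = - of_real (Q $$ (c, d))"
    if "symplectic_adjoint n P = - Q" for P Q
    using arg_cong[OF index_symplectic_adjoint_eq_uminus[OF that c d], of of_real] by (simp add: s_def)
  have delta: "s * (if symp_swap n d = symp_swap n c then w else 0) = (if c = d then w else 0)" for w
    using c d symp_swap_swap[OF c] symp_swap_swap[OF d] by (auto simp: s_def)
  have delay: "s * (\<Sum>k\<in>{1..m}.
        of_real (Mplus (A k) $$ (symp_swap n d, symp_swap n c)) * poly f (- of_real (\<tau> k))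
      + of_real (Mminus (A k) $$ (symp_swap n d, symp_swap n c)) * poly f (of_real (\<tau> k)))
    = - (\<Sum>k\<in>{1..m}. of_real (Mminus (A k) $$ (c, d)) * poly f (- of_real (\<tau> k))
        + of_real (Mplus (A k) $$ (c, d)) * poly f (of_real (\<tau> k)))"
    unfolding sum_distrib_left sum_negf[symmetric]
    by (rule sum.cong[OF refl]) (simp add: distrib_left mult.assoc[symmetric] adjoint_entry adjoint_Mplus adjoint_Mminus)
  have "s * boundary_mat z f $$ (symp_swap n d, symp_swap n c)
      = s * (if symp_swap n d = symp_swap n c then z * poly f 0 else 0)
      - s * of_real (M0 (A 0) B C D \<xi> $$ (symp_swap n d, symp_swap n c)) * poly f 0
      - s * (\<Sum>k\<in>{1..m}.
          of_real (Mplus (A k) $$ (symp_swap n d, symp_swap n c)) * poly f (- of_real (\<tau> k))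
        + of_real (Mminus (A k) $$ (symp_swap n d, symp_swap n c)) * poly f (of_real (\<tau> k)))"
    using symp_swap_less[OF c] symp_swap_less[OF d]
    by (simp add: boundary_mat_def right_diff_distrib mult.assoc)
  then show ?thesis
    unfolding s_def[symmetric] delta delay adjoint_entry[OF adjoint_M0] by simp
qed

lemma symplectic_adjoint_boundary_mat:
  "symplectic_adjoint n (boundary_mat z f) = boundary_mat (- z) (point_reflection f)"
proof (rule eq_matI)
  fix c d assume "c < dim_row (boundary_mat (- z) (point_reflection f))"
    and "d < dim_col (boundary_mat (- z) (point_reflection f))"
  then have c: "c < 2 * n" and d: "d < 2 * n" by (simp_all add: boundary_mat_def)
  have "symplectic_adjoint n (boundary_mat z f) $$ (c, d)
      = symp_sign n c * symp_sign n d * boundary_mat z f $$ (symp_swap n d, symp_swap n c)"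
    using c d by (simp add: index_symplectic_adjoint)
  also have "\<dots> = boundary_mat (- z) (point_reflection f) $$ (c, d)"
    unfolding boundary_mat_symp_swap[OF c d] using c d
    by (simp add: boundary_mat_def sum.distrib sum_subtractf sum_negf algebra_simps)
  finally show "symplectic_adjoint n (boundary_mat z f) $$ (c, d)
    = boundary_mat (- z) (point_reflection f) $$ (c, d)" .
qed (simp_all add: boundary_mat_def)

lemma boundary_mat_singular:
  assumes a: "\<exists>c<2 * n. a c \<noteq> 0"
    and sep: "\<And>d. d < 2 * n \<Longrightarrow> interp N \<theta> x d = smult (a d) f"
    and eig: "\<forall>c<2 * n. L x 0 c = z * x 0 c"
  shows "det (boundary_mat z f) = 0"
proof -
  have "(boundary_mat z f *\<^sub>v vec (2 * n) a) $ c = 0" if "c < 2 * n" for c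
  proof -
    have "x 0 c = a c * poly f 0"
      using poly_interp[OF mesh_mono, of 0 x c] sep[OF that] mesh_zero by simp
    then show ?thesis using boundary_mat_mult_vec[OF sep that, of z] eig that by simp
  qed
  then have "boundary_mat z f *\<^sub>v vec (2 * n) a = 0\<^sub>v (2 * n)"
    by (intro eq_vecI) (auto simp: boundary_mat_def)
  moreover have "vec (2 * n) a \<noteq> 0\<^sub>v (2 * n)" using a by (metis index_vec index_zero_vec(1))
  ultimately show ?thesis
    using det_0_iff_vec_prod_zero[OF boundary_mat_carrier] vec_carrier by blast
qed

lemma Lop_eigenvalue_if_boundary_mat_singular:
  assumes deg: "degree g \<le> 2 * N" and "g \<noteq> 0"
    and coll: "\<And>i. i \<in> {- int N..int N} - {0} \<Longrightarrow>
      poly (pderiv g) (of_real (\<theta> i)) = z * poly g (of_real (\<theta> i))"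
    and "det (boundary_mat z g) = 0"
  shows "Lop_eigenvalue z"
proof -
  obtain b where b: "b \<in> carrier_vec (2 * n)" "b \<noteq> 0\<^sub>v (2 * n)" "boundary_mat z g *\<^sub>v b = 0\<^sub>v (2 * n)"
    using assms(4) det_0_iff_vec_prod_zero[OF boundary_mat_carrier] by blast
  define y where "y i c = b $ c * poly g (of_real (\<theta> i))" for i c
  have interp_y: "interp N \<theta> y c = smult (b $ c) g" for c
    by (rule interp_eqI[OF mesh_mono]) (use deg in \<open>auto simp: y_def intro: order_trans[OF degree_smult_le]\<close>)
  have "L y i c = z * y i c" if i: "i \<in> {- int N..int N}" and c: "c < 2 * n" for i c
  proof (cases "i = 0")
    case True
    have "vec (2 * n) (($) b) = b" using b(1) by auto
    then have "z * b $ c * poly g 0 - L y 0 c = 0"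
      using boundary_mat_mult_vec[where a = "($) b", OF interp_y c, of z] b(3) c by simp
    then show ?thesis using True mesh_zero by (simp add: y_def mult.assoc)
  next
    case False
    then show ?thesis using coll[of i] i interp_y unfolding Lop_def y_def by (simp add: pderiv_smult)
  qed
  moreover have "\<exists>i\<in>{- int N..int N}. \<exists>c<2 * n. y i c \<noteq> 0"
  proof -
    obtain c where "c < 2 * n" "b $ c \<noteq> 0" using b(1,2) by (metis eq_vecI carrier_vecD index_zero_vec)
    moreover obtain i where "i \<in> {- int N..int N}" "poly g (of_real (\<theta> i)) \<noteq> 0"
      using poly_eq_on_mesh[OF mesh_mono deg, of 0] \<open>g \<noteq> 0\<close> by auto
    ultimately show ?thesis by (auto simp: y_def)
  qed
  ultimately show ?thesis unfolding Lop_eigenvalue_def by (intro exI[of _ y]) blast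
qed

lemma Lop_eigenvalue_uminus:
  assumes "Lop_eigenvalue z"
  shows "Lop_eigenvalue (- z)"
proof (cases "z = 0")
  case False
  obtain x where nonzero: "\<exists>i\<in>{- int N..int N}. \<exists>c<2 * n. x i c \<noteq> 0"
    and eig: "\<forall>i\<in>{- int N..int N}. \<forall>c<2 * n. L x i c = z * x i c"
    using assms unfolding Lop_eigenvalue_def by blast
  obtain f a where f: "pderiv f - smult z f = node_poly" "degree f \<le> 2 * N"
    and a: "\<exists>c<2 * n. a c \<noteq> 0" "\<And>c. c < 2 * n \<Longrightarrow> interp N \<theta> x c = smult (a c) f"
    using eigenvector_separable[OF False nonzero eig] by blast
  have "det (boundary_mat z f) = 0" using boundary_mat_singular[OF a] eig by simp
  then have "det (boundary_mat (- z) (point_reflection f)) = 0"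
    using det_symplectic_adjoint_eq_0[OF boundary_mat_carrier] symplectic_adjoint_boundary_mat by metis
  moreover have "f \<noteq> 0" using f(1) node_poly_nonzero by auto
  ultimately show ?thesis
    using f point_reflection_collocation by (intro Lop_eigenvalue_if_boundary_mat_singular) auto
qed (use assms in simp)

lemma Lop_eigenvalue_iff_uminus_cnj: "Lop_eigenvalue z \<longleftrightarrow> Lop_eigenvalue (- cnj z)"
  using Lop_eigenvalue_cnj Lop_eigenvalue_uminus by (metis complex_cnj_cnj complex_cnj_minus minus_minus)

end

theorem proposition2:
  fixes n m nu ny N :: nat
    and A :: "nat \<Rightarrow> real mat" and B C D :: "real mat"
    and \<tau> :: "nat \<Rightarrow> real" and \<xi> :: real and \<theta> :: "int \<Rightarrow> real"
  assumes "n > 0" "m > 0" "nu > 0" "ny > 0"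
    and "\<forall>k\<le>m. A k \<in> carrier_mat n n"
    and "B \<in> carrier_mat n nu" "C \<in> carrier_mat ny n" "D \<in> carrier_mat ny nu"
    and "\<forall>k\<in>{1..m}. \<tau> k \<ge> 0"
    and "Max (\<tau> ` {1..m}) > 0"
    and "\<xi> > 0"
    and "det (Dxi D \<xi>) \<noteq> 0"
    and "N > 0"
    and "\<forall>i\<in>{- int N..int N}. \<forall>j\<in>{- int N..int N}. i < j \<longrightarrow> \<theta> i < \<theta> j"
    and "\<theta> 0 = 0"
    and "- Max (\<tau> ` {1..m}) \<le> \<theta> (- int N)" "\<theta> (int N) \<le> Max (\<tau> ` {1..m})"
    and "\<forall>i\<in>{1..int N}. \<theta> (- i) = - \<theta> i"
  shows "\<forall>z::complex.
     det (z \<cdot>\<^sub>m 1\<^sub>m ((2*N+1)*(2*n)) - LN n m A B C D \<tau> \<xi> N \<theta>) = 0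
     \<longleftrightarrow> det ((- cnj z) \<cdot>\<^sub>m 1\<^sub>m ((2*N+1)*(2*n)) - LN n m A B C D \<tau> \<xi> N \<theta>) = 0"
proof -
  have mesh_symmetric: "\<theta> (- i) = - \<theta> i" if i: "i \<in> {- int N..int N}" for i
  proof -
    consider "i = 0" | "i \<in> {1..int N}" | "- i \<in> {1..int N}"
      using i by (cases i "0::int" rule: linorder_cases) auto
    then show ?thesis
    proof cases
      case 3
      then have "\<theta> (- (- i)) = - \<theta> (- i)" using assms(18) by blast
      then show ?thesis by simp
    qed (use assms(15,18) in auto)
  qed
  interpret symmetric_collocation n m A B C D \<tau> \<xi> N \<theta>
  proof
    show "strict_mono_on {- int N..int N} \<theta>" using assms(14) by (intro strict_mono_onI) auto
    show "symplectic_adjoint n (M0 (A 0) B C D \<xi>) = - M0 (A 0) B C D \<xi>"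
      using assms(5-8,11,12) by (intro symplectic_adjoint_M0) auto
  qed (use assms(1,5) mesh_symmetric in \<open>auto intro: symplectic_adjoint_Mplus symplectic_adjoint_Mminus\<close>)
  show ?thesis using det_char_LN_eq_0_iff Lop_eigenvalue_iff_uminus_cnj by blast
qed

end
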